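(* For every $\gamma>0$ and every $m\ge0$, $\kappa_m\le\frac32$.
   Context: Fix $\gamma>0$. $\nu^{\gamma}(dx)=x^{\gamma-1}e^{-x}\Gamma(\gamma)^{-1}dx$ on $(0,\infty)$; $\mathcal{S}_{\mathcal{E},N}=\{x\in(0,\infty)^N:\frac1N\sum_i x_i=\mathcal{E}\}$; $\nu_{\mathcal{E},N}=\nu^\gamma_{\mathcal{E},N}$ is the conditional law of $(\nu^\gamma)^{\otimes N}$ on $\mathcal{S}_{\mathcal{E},N}$. $\mu^\gamma$ is the Beta$(\gamma,\gamma)$ law on $[0,1]$. $T_{i,j,\alpha}x$ replaces $x_i$ by $\alpha(x_i+x_j)$ and $x_j$ by $(1-\alpha)(x_i+x_j)$. $E_{i,j}f(x)=\int\mu^\gamma(d\alpha)f(T_{i,j,\alpha}x)$, $D_{i,j}f=E_{i,j}f-f$. $\mathcal{D}^{*,m}_{\mathcal{E},N}(f)=\sum_{i=1}^{N-1}E_{\nu_{\mathcal{E},N}}[(x_i+x_{i+1})^m(D_{i,i+1}f)^2]$; $\lambda^{*,m}(\mathcal{E},N)$ is the infimum of $\mathcal{D}^{*,m}_{\mathcal{E},N}(f)/E_{\nu_{\mathcal{E},N}}[f^2]$ over nonzero mean-zero $f\in L^2(\nu_{\mathcal{E},N})$; $\kappa_m=\lambda^{*,m}(\frac13,3)$. *)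

theory Defs
  imports "HOL-Analysis.Analysis"
begin

text \<open>Points of (0,\<infinity>)^N are functions nat => real on the index set {1..N}
  (extensional, i.e. elements of PiE {1..N} UNIV).\<close>

definition gamma_dens :: "real \<Rightarrow> real \<Rightarrow> real" where
  "gamma_dens \<gamma> x = (if 0 < x then x powr (\<gamma> - 1) * exp (- x) / Gamma \<gamma> else 0)"

definition simplexS :: "real \<Rightarrow> nat \<Rightarrow> (nat \<Rightarrow> real) set" where
  "simplexS E N = {x \<in> PiE {1..N} (\<lambda>_. UNIV).
      (\<forall>i\<in>{1..N}. 0 < x i) \<and> (\<Sum>i\<in>{1..N}. x i) / real N = E}"

definition hyp_param :: "real \<Rightarrow> nat \<Rightarrow> (nat \<Rightarrow> real) \<Rightarrow> (nat \<Rightarrow> real)" where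
  "hyp_param E N y = (\<lambda>i. if i \<in> {1..<N} then y i
       else if i = N then real N * E - (\<Sum>j\<in>{1..<N}. y j) else undefined)"

text \<open>Unnormalised conditional law: product density (nu^gamma)^N restricted to the
  hyperplane, w.r.t. the Lebesgue (surface) measure on the hyperplane, realised via
  the coordinate chart hyp_param.\<close>
definition nu_unnorm :: "real \<Rightarrow> real \<Rightarrow> nat \<Rightarrow> (nat \<Rightarrow> real) measure" where
  "nu_unnorm \<gamma> E N =
     distr (density (PiM {1..<N} (\<lambda>_. lborel))
              (\<lambda>y. ennreal (indicator (simplexS E N) (hyp_param E N y)
                    * (\<Prod>i\<in>{1..N}. gamma_dens \<gamma> (hyp_param E N y i)))))
           (PiM {1..N} (\<lambda>_. lborel)) (hyp_param E N)"

definition nu_cond :: "real \<Rightarrow> real \<Rightarrow> nat \<Rightarrow> (nat \<Rightarrow> real) measure" where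
  "nu_cond \<gamma> E N =
     scale_measure (1 / emeasure (nu_unnorm \<gamma> E N) (space (nu_unnorm \<gamma> E N)))
                   (nu_unnorm \<gamma> E N)"

definition beta_law :: "real \<Rightarrow> real measure" where
  "beta_law \<gamma> = density lborel
     (\<lambda>a. ennreal (indicator {0..1} a * a powr (\<gamma> - 1) * (1 - a) powr (\<gamma> - 1) / Beta \<gamma> \<gamma>))"

definition T_op :: "nat \<Rightarrow> nat \<Rightarrow> real \<Rightarrow> (nat \<Rightarrow> real) \<Rightarrow> (nat \<Rightarrow> real)" where
  "T_op i j \<alpha> x = x(i := \<alpha> * (x i + x j), j := (1 - \<alpha>) * (x i + x j))"

definition E_op :: "real \<Rightarrow> nat \<Rightarrow> nat \<Rightarrow> ((nat \<Rightarrow> real) \<Rightarrow> real) \<Rightarrow> (nat \<Rightarrow> real) \<Rightarrow> real" where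
  "E_op \<gamma> i j f x = (\<integral>\<alpha>. f (T_op i j \<alpha> x) \<partial>beta_law \<gamma>)"

definition D_op :: "real \<Rightarrow> nat \<Rightarrow> nat \<Rightarrow> ((nat \<Rightarrow> real) \<Rightarrow> real) \<Rightarrow> (nat \<Rightarrow> real) \<Rightarrow> real" where
  "D_op \<gamma> i j f x = E_op \<gamma> i j f x - f x"

definition dirichlet :: "real \<Rightarrow> real \<Rightarrow> real \<Rightarrow> nat \<Rightarrow> ((nat \<Rightarrow> real) \<Rightarrow> real) \<Rightarrow> ennreal" where
  "dirichlet \<gamma> m E N f = (\<Sum>i\<in>{1..<N}.
      \<integral>\<^sup>+ x. ennreal ((x i + x (Suc i)) powr m * (D_op \<gamma> i (Suc i) f x)\<^sup>2) \<partial>nu_cond \<gamma> E N)"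

definition lambda_star :: "real \<Rightarrow> real \<Rightarrow> real \<Rightarrow> nat \<Rightarrow> ennreal" where
  "lambda_star \<gamma> m E N = (INF f \<in> {f. f \<in> borel_measurable (nu_cond \<gamma> E N)
        \<and> integrable (nu_cond \<gamma> E N) (\<lambda>x. (f x)\<^sup>2)
        \<and> (\<integral>x. f x \<partial>nu_cond \<gamma> E N) = 0
        \<and> (\<integral>x. (f x)\<^sup>2 \<partial>nu_cond \<gamma> E N) \<noteq> 0}.
      dirichlet \<gamma> m E N f / ennreal (\<integral>x. (f x)\<^sup>2 \<partial>nu_cond \<gamma> E N))"

definition kappa :: "real \<Rightarrow> real \<Rightarrow> ennreal" where
  "kappa \<gamma> m = lambda_star \<gamma> m (1/3) 3"

end

theory Submission
  imports Defs "HOL-Probability.Probability"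
begin

text \<open>The bound comes from the test function \<open>f x = x\<^sub>1 - c\<close> with \<open>c = E x\<^sub>1\<close>.
  The move on the pair (2,3) leaves \<open>f\<close> unchanged, and since the Beta(\<gamma>,\<gamma>) law has
  mean 1/2 the move on (1,2) gives \<open>D\<^sub>1\<^sub>2 f = (x\<^sub>2 - x\<^sub>1)/2\<close>. On the simplex the weight
  \<open>(x\<^sub>1 + x\<^sub>2)\<^sup>m\<close> is at most 1, and \<open>((x\<^sub>2 - x\<^sub>1)/2)\<^sup>2 \<le> ((x\<^sub>1 - c)\<^sup>2 + (x\<^sub>2 - c)\<^sup>2)/2\<close>,
  whose expectation is \<open>E f\<^sup>2\<close> because \<open>\<nu>\<close> is exchangeable. So the Rayleigh quotient of \<open>f\<close>
  is at most 1. Most of the work lies in showing that \<open>\<nu>\<^sub>1\<^sub>/\<^sub>3\<^sub>,\<^sub>3\<close> is a probability measure: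
  in the chart \<open>(x\<^sub>1, x\<^sub>2)\<close> its density is a product of three Gamma densities, which is
  dominated by a sum of products of two integrable powers.\<close>

subsection \<open>The Beta law\<close>

definition beta_density :: "real \<Rightarrow> real \<Rightarrow> real" where
  "beta_density g a = indicator {0..1} a * a powr (g - 1) * (1 - a) powr (g - 1) / Beta g g"

lemma beta_density_measurable [measurable]: "beta_density g \<in> borel_measurable borel"
  unfolding beta_density_def by measurable

lemma Beta_real_pos: "0 < a \<Longrightarrow> 0 < b \<Longrightarrow> 0 < Beta a (b::real)"
  by (simp add: Beta_altdef rGamma_inverse_Gamma)

lemma beta_density_nonneg: "0 < g \<Longrightarrow> 0 \<le> beta_density g a"
  using Beta_real_pos[of g g] by (simp add: beta_density_def)

lemma beta_law_eq_density: "beta_law g = density lborel (\<lambda>a. ennreal (beta_density g a))"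
  unfolding beta_law_def beta_density_def ..

lemma nn_integral_Beta_real:
  assumes "0 < p" "0 < q"
  shows "(\<integral>\<^sup>+ t. ennreal (indicator {0..1} t * t powr (p - 1) * (1 - t) powr (q - 1)) \<partial>lborel)
       = ennreal (Beta p q)"
proof -
  have "(\<lambda>t. indicator {0..1} t * t powr (p - 1) * (1 - t) powr (q - 1))
      = (\<lambda>t. if t \<in> {0..1} then t powr (p - 1) * (1 - t) powr (q - 1) else 0)"
    by (simp add: fun_eq_iff)
  then have "((\<lambda>t. indicator {0..1} t * t powr (p - 1) * (1 - t) powr (q - 1)) has_integral Beta p q) UNIV"
    using has_integral_Beta_real[OF assms] by (simp only: has_integral_restrict_UNIV)
  then show ?thesis
    by (rule nn_integral_has_integral_lborel[rotated 2]) auto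
qed

lemma nn_integral_beta_density:
  assumes "0 < g" "h \<in> borel_measurable borel"
    and "\<And>t. 0 \<le> t \<Longrightarrow> t \<le> 1 \<Longrightarrow> beta_density g t * h t
           = t powr (p - 1) * (1 - t) powr (q - 1) / Beta g g"
    and "0 < p" "0 < q"
  shows "(\<integral>\<^sup>+ t. ennreal (beta_density g t * h t) \<partial>lborel) = ennreal (Beta p q / Beta g g)"
proof -
  have B: "0 < Beta g g" by (rule Beta_real_pos[OF assms(1) assms(1)])
  have "(\<integral>\<^sup>+ t. ennreal (beta_density g t * h t) \<partial>lborel)
      = (\<integral>\<^sup>+ t. ennreal (indicator {0..1} t * t powr (p - 1) * (1 - t) powr (q - 1)) / ennreal (Beta g g) \<partial>lborel)"
  proof (rule nn_integral_cong)
    fix t :: real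
    show "ennreal (beta_density g t * h t)
        = ennreal (indicator {0..1} t * t powr (p - 1) * (1 - t) powr (q - 1)) / ennreal (Beta g g)"
    proof (cases "t \<in> {0..1}")
      case True
      then show ?thesis using assms(3)[of t] B by (simp add: divide_ennreal)
    qed (simp add: beta_density_def)
  qed
  also have "\<dots> = (\<integral>\<^sup>+ t. ennreal (indicator {0..1} t * t powr (p - 1) * (1 - t) powr (q - 1)) \<partial>lborel)
      / ennreal (Beta g g)"
    by (rule nn_integral_divide) measurable
  also have "\<dots> = ennreal (Beta p q / Beta g g)"
    using B Beta_real_pos[OF assms(4,5)] by (simp add: nn_integral_Beta_real assms(4,5) divide_ennreal)
  finally show ?thesis .
qed

lemma prob_space_beta_law: "0 < g \<Longrightarrow> prob_space (beta_law g)"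
  using nn_integral_beta_density[of g "\<lambda>_. 1" g g] Beta_real_pos[of g g]
  by (intro prob_spaceI) (simp add: beta_law_eq_density emeasure_density beta_density_def)

lemma AE_beta_law_unit_interval: "AE a in beta_law g. 0 \<le> a \<and> a \<le> 1"
  unfolding beta_law_eq_density
  by (subst AE_density) (auto simp: beta_density_def intro!: AE_I2 split: split_indicator)

lemma beta_law_mean:
  assumes "0 < g"
  shows "(\<integral>a. a \<partial>beta_law g) = 1/2"
proof -
  have "(g + g) * Beta (g + 1) g = g * Beta g g"
    by (rule Beta_plus1_left) (use assms in \<open>auto dest: nonpos_Ints_nonpos\<close>)
  then have ratio: "Beta (g + 1) g / Beta g g = 1/2"
    using assms Beta_real_pos[OF assms assms] by (simp add: field_simps)
  have "(\<integral>a. a \<partial>beta_law g) = enn2real (\<integral>\<^sup>+ a. ennreal a \<partial>beta_law g)"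
    by (rule integral_eq_nn_integral) (use AE_beta_law_unit_interval in \<open>auto simp: beta_law_eq_density\<close>)
  also have "(\<integral>\<^sup>+ a. ennreal a \<partial>beta_law g) = (\<integral>\<^sup>+ a. ennreal (beta_density g a * a) \<partial>lborel)"
    unfolding beta_law_eq_density
    by (subst nn_integral_density)
       (auto simp: ennreal_mult' beta_density_nonneg[OF assms] intro!: nn_integral_cong)
  also have "\<dots> = ennreal (Beta (g + 1) g / Beta g g)"
  proof (rule nn_integral_beta_density)
    fix t :: real
    assume t: "0 \<le> t" "t \<le> 1"
    then have "beta_density g t * t = (t * t powr (g - 1)) * (1 - t) powr (g - 1) / Beta g g"
      by (simp add: beta_density_def mult_ac)
    also have "\<dots> = t powr (g + 1 - 1) * (1 - t) powr (g - 1) / Beta g g"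
      using t by (simp add: powr_mult_base)
    finally show "beta_density g t * t = t powr (g + 1 - 1) * (1 - t) powr (g - 1) / Beta g g" .
  qed (use assms in auto)
  finally show ?thesis
    using ratio by (simp del: ennreal_half)
qed

lemma E_op_untouched_coordinate:
  assumes "0 < g" "k \<noteq> i" "k \<noteq> j"
  shows "E_op g i j (\<lambda>x. \<phi> (x k)) x = \<phi> (x k)"
proof -
  interpret prob_space "beta_law g" by (rule prob_space_beta_law[OF assms(1)])
  show ?thesis using assms unfolding E_op_def T_op_def by (simp add: prob_space)
qed

lemma E_op_moved_coordinate:
  assumes "0 < g" "i \<noteq> j"
  shows "E_op g i j (\<lambda>x. x i - c) x = (x i + x j) / 2 - c"
proof -
  interpret prob_space "beta_law g" by (rule prob_space_beta_law[OF assms(1)])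
  have "integrable (beta_law g) (\<lambda>a. a)"
  proof (rule integrable_const_bound[where B=1])
    show "AE a in beta_law g. norm a \<le> 1"
      using AE_beta_law_unit_interval[of g] by eventually_elim auto
  qed (simp add: beta_law_eq_density)
  then have "E_op g i j (\<lambda>x. x i - c) x = (\<integral>a. a \<partial>beta_law g) * (x i + x j) - c"
    using assms unfolding E_op_def T_op_def by (simp add: prob_space)
  then show ?thesis using beta_law_mean[OF assms(1)] by simp
qed

subsection \<open>The Gamma product density on the 2-simplex\<close>

abbreviation lborel2 :: "(real \<times> real) measure" where
  "lborel2 \<equiv> lborel \<Otimes>\<^sub>M lborel"

lemma nn_integral_lborel2_swap:
  fixes F :: "real \<Rightarrow> real \<Rightarrow> ennreal"
  assumes [measurable]: "case_prod F \<in> borel_measurable lborel2"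
  shows "(\<integral>\<^sup>+ z. F (snd z) (fst z) \<partial>lborel2) = (\<integral>\<^sup>+ z. F (fst z) (snd z) \<partial>lborel2)"
proof -
  have swapped: "(\<lambda>z. F (snd z) (fst z)) \<in> borel_measurable lborel2" by measurable
  have "(\<integral>\<^sup>+ z. F (snd z) (fst z) \<partial>lborel2) = (\<integral>\<^sup>+ x. \<integral>\<^sup>+ y. F y x \<partial>lborel \<partial>lborel)"
    using lborel.nn_integral_fst[OF swapped] by simp
  also have "\<dots> = (\<integral>\<^sup>+ y. \<integral>\<^sup>+ x. F y x \<partial>lborel \<partial>lborel)"
    by (rule lborel_pair.Fubini'[symmetric]) (use swapped in \<open>simp add: case_prod_unfold\<close>)
  also have "\<dots> = (\<integral>\<^sup>+ z. F (fst z) (snd z) \<partial>lborel2)"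
    using lborel.nn_integral_fst[of "\<lambda>z. F (fst z) (snd z)"] by simp
  finally show ?thesis .
qed

lemma nn_integral_lborel2_pos:
  fixes F :: "real \<times> real \<Rightarrow> real"
  assumes [measurable]: "F \<in> borel_measurable lborel2"
    and pos: "\<And>x y. x \<in> {a1..a2} \<Longrightarrow> y \<in> {b1..b2} \<Longrightarrow> 0 < F (x, y)"
    and "a1 < a2" "b1 < b2"
  shows "0 < (\<integral>\<^sup>+ z. ennreal (F z) \<partial>lborel2)"
proof (rule ccontr)
  assume "\<not> ?thesis"
  then have "(\<integral>\<^sup>+ z. ennreal (F z) \<partial>lborel2) = 0"
    by simp
  then have "AE z in lborel2. ennreal (F z) = 0"
    by (subst (asm) nn_integral_0_iff_AE) auto
  then have "AE z in lborel2. z \<notin> {a1..a2} \<times> {b1..b2}"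
    by eventually_elim (use pos in force)
  then have "emeasure lborel2 ({a1..a2} \<times> {b1..b2}) = 0"
    by (subst (asm) AE_iff_measurable[where N="{a1..a2} \<times> {b1..b2}"]) (auto simp: space_pair_measure)
  moreover have "emeasure lborel2 ({a1..a2} \<times> {b1..b2}) = ennreal (a2 - a1) * ennreal (b2 - b1)"
    using assms(3,4) by (simp add: lborel.emeasure_pair_measure_Times)
  ultimately show False using assms(3,4) by (simp add: ennreal_mult[symmetric])
qed

definition unit_powr :: "real \<Rightarrow> real \<Rightarrow> real" where
  "unit_powr q t = indicator {0..1} t * t powr q"

lemma unit_powr_nonneg: "0 \<le> unit_powr q t"
  by (simp add: unit_powr_def)

lemma unit_powr_measurable [measurable]: "unit_powr q \<in> borel_measurable borel"
  unfolding unit_powr_def by measurable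

lemma nn_integral_unit_powr:
  assumes "-1 < q"
  shows "(\<integral>\<^sup>+ t. ennreal (unit_powr q t) \<partial>lborel) = ennreal (1 / (q + 1))"
proof -
  have "((\<lambda>t. t powr q) has_integral (1 / (q + 1))) {0..1}"
    using has_integral_powr_from_0[of q 1] assms by simp
  moreover have "unit_powr q = (\<lambda>t. if t \<in> {0..1} then t powr q else 0)"
    by (simp add: unit_powr_def fun_eq_iff)
  ultimately have "(unit_powr q has_integral (1 / (q + 1))) UNIV"
    by (simp only: has_integral_restrict_UNIV)
  then show ?thesis
    by (rule nn_integral_has_integral_lborel[rotated 2]) (auto simp: unit_powr_nonneg)
qed

lemma nn_integral_unit_powr_reflect:
  assumes "-1 < q"
  shows "(\<integral>\<^sup>+ y. ennreal (unit_powr q (t - y)) \<partial>lborel) = ennreal (1 / (q + 1))"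
proof -
  have "(\<integral>\<^sup>+ y. ennreal (unit_powr q y) \<partial>lborel)
      = ennreal \<bar>-1\<bar> * (\<integral>\<^sup>+ y. ennreal (unit_powr q (t + (-1) * y)) \<partial>lborel)"
    by (rule nn_integral_real_affine) auto
  then show ?thesis using nn_integral_unit_powr[OF assms] by simp
qed

lemma nn_integral_unit_powr_pair:
  assumes "-1 < q"
  shows "(\<integral>\<^sup>+ z. ennreal (unit_powr q (fst z) * unit_powr q (snd z)) \<partial>lborel2)
       = ennreal (1 / (q + 1)) * ennreal (1 / (q + 1))"
proof -
  have "(\<integral>\<^sup>+ z. ennreal (unit_powr q (fst z) * unit_powr q (snd z)) \<partial>lborel2)
      = (\<integral>\<^sup>+ x. \<integral>\<^sup>+ y. ennreal (unit_powr q x) * ennreal (unit_powr q y) \<partial>lborel \<partial>lborel)"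
    by (subst lborel.nn_integral_fst[symmetric]) (auto simp: ennreal_mult unit_powr_nonneg)
  also have "\<dots> = ennreal (1 / (q + 1)) * ennreal (1 / (q + 1))"
    by (simp add: nn_integral_cmult nn_integral_multc nn_integral_unit_powr[OF assms])
  finally show ?thesis .
qed

lemma nn_integral_unit_powr_pair_complement:
  assumes "-1 < q"
  shows "(\<integral>\<^sup>+ z. ennreal (unit_powr q (fst z) * unit_powr q (1 - fst z - snd z)) \<partial>lborel2)
       = ennreal (1 / (q + 1)) * ennreal (1 / (q + 1))"
proof -
  have "(\<integral>\<^sup>+ z. ennreal (unit_powr q (fst z) * unit_powr q (1 - fst z - snd z)) \<partial>lborel2)
      = (\<integral>\<^sup>+ x. \<integral>\<^sup>+ y. ennreal (unit_powr q x) * ennreal (unit_powr q ((1 - x) - y)) \<partial>lborel \<partial>lborel)"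
    by (subst lborel.nn_integral_fst[symmetric]) (auto simp: ennreal_mult unit_powr_nonneg)
  also have "\<dots> = ennreal (1 / (q + 1)) * ennreal (1 / (q + 1))"
    by (simp add: nn_integral_cmult nn_integral_multc nn_integral_unit_powr[OF assms]
        nn_integral_unit_powr_reflect[OF assms])
  finally show ?thesis .
qed

lemma gamma_dens_le_powr:
  assumes "0 < g" "q \<le> g - 1" "0 < x" "x \<le> 1"
  shows "gamma_dens g x \<le> x powr q / Gamma g"
proof -
  have "x powr (g - 1) * exp (- x) \<le> x powr (g - 1)"
    using assms by (intro mult_left_le) auto
  also have "\<dots> \<le> x powr q"
    using assms by (intro powr_mono') auto
  finally show ?thesis
    using assms by (simp add: gamma_dens_def divide_right_mono)
qed

lemma powr_prod3_le_sum_pairs: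
  fixes a b c q :: real
  assumes "0 < a" "0 < b" "0 < c" "a + b + c = 1" "q \<le> 0"
  shows "a powr q * b powr q * c powr q
       \<le> (1/3) powr q * (a powr q * b powr q + a powr q * c powr q + b powr q * c powr q)"
    (is "_ \<le> _ * ?P")
proof -
  have bound: "x powr q * (y powr q * z powr q) \<le> (1/3) powr q * ?P"
    if "1/3 \<le> x" "y powr q * z powr q \<le> ?P" for x y z
  proof -
    have "x powr q * (y powr q * z powr q) \<le> (1/3) powr q * (y powr q * z powr q)"
      using assms that by (intro mult_right_mono powr_mono2') auto
    also have "\<dots> \<le> (1/3) powr q * ?P"
      using that by (intro mult_left_mono) auto
    finally show ?thesis .
  qed
  have "0 \<le> a powr q * b powr q" "0 \<le> a powr q * c powr q" "0 \<le> b powr q * c powr q"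
    by auto
  then have pairs: "b powr q * c powr q \<le> ?P" "a powr q * c powr q \<le> ?P" "a powr q * b powr q \<le> ?P"
    by linarith+
  consider "1/3 \<le> a" | "1/3 \<le> b" | "1/3 \<le> c"
    using assms by linarith
  then show ?thesis
    using bound[of a b c] bound[of b a c] bound[of c a b] pairs by cases (simp_all add: mult_ac)
qed

text \<open>Since \<open>gamma_dens\<close> vanishes off \<open>(0,\<infinity>)\<close>, this is supported by the open simplex
  \<open>a, b, 1 - a - b > 0\<close>.\<close>
definition simplex3_density :: "real \<Rightarrow> real \<Rightarrow> real \<Rightarrow> real" where
  "simplex3_density g a b = gamma_dens g a * gamma_dens g b * gamma_dens g (1 - a - b)"

lemma simplex3_density_nonneg: "0 < g \<Longrightarrow> 0 \<le> simplex3_density g a b"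
  by (simp add: simplex3_density_def gamma_dens_def)

lemma simplex3_density_pos:
  "0 < g \<Longrightarrow> 0 < a \<Longrightarrow> 0 < b \<Longrightarrow> a + b < 1 \<Longrightarrow> 0 < simplex3_density g a b"
  by (simp add: simplex3_density_def gamma_dens_def)

lemma simplex3_density_eq_0:
  "\<not> (0 < a \<and> 0 < b \<and> a + b < 1) \<Longrightarrow> simplex3_density g a b = 0"
  by (auto simp: simplex3_density_def gamma_dens_def)

lemma simplex3_density_commute: "simplex3_density g a b = simplex3_density g b a"
  by (simp add: simplex3_density_def algebra_simps)

lemma simplex3_density_measurable [measurable]:
  "(\<lambda>z. simplex3_density g (fst z) (snd z)) \<in> borel_measurable lborel2"
  unfolding simplex3_density_def gamma_dens_def by measurable

abbreviation simplex3_mass :: "real \<Rightarrow> ennreal" where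
  "simplex3_mass g \<equiv> \<integral>\<^sup>+ z. ennreal (simplex3_density g (fst z) (snd z)) \<partial>lborel2"

lemma simplex3_mass_pos: "0 < g \<Longrightarrow> 0 < simplex3_mass g"
  by (rule nn_integral_lborel2_pos[of _ "1/10" "2/10" "1/10" "2/10"])
     (auto intro!: simplex3_density_pos)

lemma simplex3_density_le:
  assumes "0 < g" "q \<le> 0" "q \<le> g - 1"
  shows "simplex3_density g a b \<le> (1/3) powr q / Gamma g ^ 3
    * (unit_powr q a * unit_powr q b + unit_powr q a * unit_powr q (1 - a - b)
       + unit_powr q b * unit_powr q (1 - a - b))"
proof (cases "0 < a \<and> 0 < b \<and> a + b < 1")
  case False
  then show ?thesis
    using assms by (simp add: simplex3_density_eq_0 unit_powr_nonneg)
next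
  case True
  define c where "c = 1 - a - b"
  have abc: "0 < a" "0 < b" "0 < c" "a \<le> 1" "b \<le> 1" "c \<le> 1" using True by (auto simp: c_def)
  have "simplex3_density g a b \<le> (a powr q / Gamma g) * (b powr q / Gamma g) * (c powr q / Gamma g)"
    unfolding simplex3_density_def c_def[symmetric] using abc assms
    by (intro mult_mono gamma_dens_le_powr mult_nonneg_nonneg) (auto simp: gamma_dens_def)
  also have "\<dots> = (a powr q * b powr q * c powr q) / Gamma g ^ 3"
    by (simp add: power3_eq_cube)
  also have "\<dots> \<le> (1/3) powr q * (a powr q * b powr q + a powr q * c powr q + b powr q * c powr q)
      / Gamma g ^ 3"
    using abc assms by (intro divide_right_mono powr_prod3_le_sum_pairs) (auto simp: c_def)
  finally show ?thesis
    using abc by (simp add: unit_powr_def c_def)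
qed

lemma simplex3_mass_finite:
  assumes "0 < g"
  shows "simplex3_mass g < \<infinity>"
proof -
  define q where "q = min (g - 1) 0"
  define K where "K = (1/3) powr q / Gamma g ^ 3"
  have q: "-1 < q" "q \<le> 0" "q \<le> g - 1" using assms by (auto simp: q_def)
  have K: "0 \<le> K" using assms by (simp add: K_def)
  let ?u = "unit_powr q"
  have "simplex3_mass g
      \<le> (\<integral>\<^sup>+ z. ennreal (K * (?u (fst z) * ?u (snd z) + ?u (fst z) * ?u (1 - fst z - snd z)
                              + ?u (snd z) * ?u (1 - fst z - snd z))) \<partial>lborel2)"
    using simplex3_density_le[OF assms q(2,3)] by (intro nn_integral_mono ennreal_leI) (simp add: K_def)
  also have "\<dots> = ennreal K * ((\<integral>\<^sup>+ z. ennreal (?u (fst z) * ?u (snd z)) \<partial>lborel2)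
      + (\<integral>\<^sup>+ z. ennreal (?u (fst z) * ?u (1 - fst z - snd z)) \<partial>lborel2)
      + (\<integral>\<^sup>+ z. ennreal (?u (snd z) * ?u (1 - fst z - snd z)) \<partial>lborel2))"
    using K by (simp add: ennreal_mult ennreal_plus unit_powr_nonneg nn_integral_cmult nn_integral_add)
  also have "(\<integral>\<^sup>+ z. ennreal (?u (snd z) * ?u (1 - fst z - snd z)) \<partial>lborel2)
      = (\<integral>\<^sup>+ z. ennreal (?u (fst z) * ?u (1 - fst z - snd z)) \<partial>lborel2)"
    using nn_integral_lborel2_swap[of "\<lambda>a b. ennreal (?u a * ?u (1 - a - b))"]
    by (simp add: algebra_simps case_prod_unfold)
  also have "ennreal K * ((\<integral>\<^sup>+ z. ennreal (?u (fst z) * ?u (snd z)) \<partial>lborel2)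
      + (\<integral>\<^sup>+ z. ennreal (?u (fst z) * ?u (1 - fst z - snd z)) \<partial>lborel2)
      + (\<integral>\<^sup>+ z. ennreal (?u (fst z) * ?u (1 - fst z - snd z)) \<partial>lborel2)) < \<infinity>"
    using nn_integral_unit_powr_pair[OF q(1)] nn_integral_unit_powr_pair_complement[OF q(1)]
    by (simp add: ennreal_mult_less_top ennreal_mult[symmetric] ennreal_plus[symmetric])
  finally show ?thesis .
qed

subsection \<open>The conditional law on \<open>S\<^sub>1\<^sub>/\<^sub>3\<^sub>,\<^sub>3\<close>\<close>

abbreviation chart_measure :: "(nat \<Rightarrow> real) measure" where
  "chart_measure \<equiv> PiM {1..<3} (\<lambda>_. lborel)"

abbreviation coordinate_measure :: "(nat \<Rightarrow> real) measure" where
  "coordinate_measure \<equiv> PiM {1..3} (\<lambda>_. lborel)"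

lemma atLeastLessThan_1_3: "{1..<3::nat} = {1, 2}"
  by auto

lemma atLeastAtMost_1_3: "{1..3::nat} = {1, 2, 3}"
  by auto

lemma hyp_param_one_third_3:
  "hyp_param (1/3) 3 y 1 = y 1" "hyp_param (1/3) 3 y (Suc 0) = y 1" "hyp_param (1/3) 3 y 2 = y 2"
  "hyp_param (1/3) 3 y 3 = 1 - y 1 - y 2"
  unfolding hyp_param_def atLeastLessThan_1_3 by simp_all

lemma hyp_param_one_third_3_measurable [measurable]:
  "hyp_param (1/3) 3 \<in> measurable chart_measure coordinate_measure"
proof (rule measurable_PiM_single')
  fix i :: nat
  show "(\<lambda>y. hyp_param (1/3) 3 y i) \<in> measurable chart_measure lborel"
    unfolding hyp_param_def
    by (cases "i \<in> {1..<3}"; cases "i = 3") (simp_all del: atLeastLessThan_iff)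
qed (auto simp: hyp_param_def PiE_def extensional_def)

lemma nn_integral_chart_measure:
  fixes F :: "real \<Rightarrow> real \<Rightarrow> ennreal"
  assumes "case_prod F \<in> borel_measurable lborel2"
  shows "(\<integral>\<^sup>+ y. F (y 1) (y 2) \<partial>chart_measure) = (\<integral>\<^sup>+ z. F (fst z) (snd z) \<partial>lborel2)"
proof -
  interpret product_sigma_finite "\<lambda>_::nat. lborel :: real measure" ..
  show ?thesis
    unfolding atLeastLessThan_1_3
    by (rule product_nn_integral_pair) (use assms in \<open>simp_all add: case_prod_unfold\<close>)
qed

lemma nu_unnorm_one_third_3:
  "nu_unnorm g (1/3) 3
     = distr (density chart_measure (\<lambda>y. ennreal (simplex3_density g (y 1) (y 2))))
             coordinate_measure (hyp_param (1/3) 3)"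
proof -
  have "indicator (simplexS (1/3) 3) (hyp_param (1/3) 3 y)
        * (\<Prod>i\<in>{1..3}. gamma_dens g (hyp_param (1/3) 3 y i))
      = simplex3_density g (y 1) (y 2)" for y
  proof -
    have "hyp_param (1/3) 3 y \<in> PiE {1..3} (\<lambda>_. UNIV)"
      by (auto simp: hyp_param_def PiE_def extensional_def)
    then have mem: "hyp_param (1/3) 3 y \<in> simplexS (1/3) 3 \<longleftrightarrow> 0 < y 1 \<and> 0 < y 2 \<and> y 1 + y 2 < 1"
      unfolding simplexS_def atLeastAtMost_1_3 by (auto simp: hyp_param_one_third_3)
    show ?thesis
    proof (cases "0 < y 1 \<and> 0 < y 2 \<and> y 1 + y 2 < 1")
      case True
      with mem show ?thesis
        unfolding atLeastAtMost_1_3 by (simp add: hyp_param_one_third_3 simplex3_density_def)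
    next
      case False
      with mem show ?thesis
        by (simp add: simplex3_density_eq_0)
    qed
  qed
  then show ?thesis
    unfolding nu_unnorm_def by simp
qed

lemma simplex3_density_chart_measurable [measurable]:
  "(\<lambda>y. simplex3_density g (y 1) (y 2)) \<in> borel_measurable chart_measure"
  unfolding simplex3_density_def gamma_dens_def by measurable

lemma nn_integral_nu_unnorm:
  assumes [measurable]: "f \<in> borel_measurable coordinate_measure"
  shows "(\<integral>\<^sup>+ x. f x \<partial>nu_unnorm g (1/3) 3)
       = (\<integral>\<^sup>+ y. ennreal (simplex3_density g (y 1) (y 2)) * f (hyp_param (1/3) 3 y) \<partial>chart_measure)"
proof -
  let ?dens = "density chart_measure (\<lambda>y. ennreal (simplex3_density g (y 1) (y 2)))"
  have "f \<in> borel_measurable (distr ?dens coordinate_measure (hyp_param (1/3) 3))"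
    by (simp only: measurable_distr_eq1) measurable
  moreover have "hyp_param (1/3) 3 \<in> measurable ?dens coordinate_measure"
    by (simp only: measurable_density_eq1) measurable
  ultimately show ?thesis
    unfolding nu_unnorm_one_third_3
    by (simp only: nn_integral_distr) (rule nn_integral_density; measurable)
qed

lemma emeasure_nu_unnorm_space:
  "emeasure (nu_unnorm g (1/3) 3) (space (nu_unnorm g (1/3) 3)) = simplex3_mass g"
proof -
  have "emeasure (nu_unnorm g (1/3) 3) (space (nu_unnorm g (1/3) 3))
      = (\<integral>\<^sup>+ x. 1 \<partial>nu_unnorm g (1/3) 3)"
    by simp
  also have "\<dots> = (\<integral>\<^sup>+ y. ennreal (simplex3_density g (y 1) (y 2)) \<partial>chart_measure)"
    by (subst nn_integral_nu_unnorm) simp_all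
  also have "\<dots> = simplex3_mass g"
    by (rule nn_integral_chart_measure[where F="\<lambda>a b. ennreal (simplex3_density g a b)"]) simp
  finally show ?thesis .
qed

lemma nn_integral_nu_cond:
  assumes [measurable]: "f \<in> borel_measurable coordinate_measure"
  shows "(\<integral>\<^sup>+ x. f x \<partial>nu_cond g (1/3) 3)
       = (\<integral>\<^sup>+ y. ennreal (simplex3_density g (y 1) (y 2)) * f (hyp_param (1/3) 3 y) \<partial>chart_measure)
         / simplex3_mass g"
proof -
  have "f \<in> borel_measurable (nu_unnorm g (1/3) 3)"
    unfolding nu_unnorm_one_third_3 by (simp only: measurable_distr_eq1) measurable
  then show ?thesis
    unfolding nu_cond_def emeasure_nu_unnorm_space
    by (simp add: nn_integral_scale_measure nn_integral_nu_unnorm[OF assms] divide_ennreal_def mult_ac)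
qed

lemma prob_space_nu_cond: "0 < g \<Longrightarrow> prob_space (nu_cond g (1/3) 3)"
  using simplex3_mass_pos[of g] simplex3_mass_finite[of g]
  by (intro prob_spaceI)
     (simp add: nu_cond_def space_scale_measure emeasure_nu_unnorm_space ennreal_divide_times)

lemma sets_nu_cond: "sets (nu_cond g (1/3) 3) = sets coordinate_measure"
  unfolding nu_cond_def nu_unnorm_one_third_3 by simp

lemma measurable_nu_cond:
  "h \<in> borel_measurable coordinate_measure \<Longrightarrow> h \<in> borel_measurable (nu_cond g (1/3) 3)"
  by (subst measurable_cong_sets[OF sets_nu_cond refl])

lemma nn_integral_nu_cond_pair:
  fixes F :: "real \<Rightarrow> real \<Rightarrow> ennreal"
  assumes [measurable]: "case_prod F \<in> borel_measurable lborel2"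
  shows "(\<integral>\<^sup>+ x. F (x 1) (x 2) \<partial>nu_cond g (1/3) 3)
       = (\<integral>\<^sup>+ z. ennreal (simplex3_density g (fst z) (snd z)) * F (fst z) (snd z) \<partial>lborel2)
         / simplex3_mass g"
proof -
  have [measurable]: "(\<lambda>x. case_prod F (x 1, x 2)) \<in> borel_measurable coordinate_measure"
    by measurable
  have "(\<integral>\<^sup>+ x. F (x 1) (x 2) \<partial>nu_cond g (1/3) 3)
      = (\<integral>\<^sup>+ y. ennreal (simplex3_density g (y 1) (y 2)) * F (y 1) (y 2) \<partial>chart_measure)
        / simplex3_mass g"
    using nn_integral_nu_cond[of "\<lambda>x. F (x 1) (x 2)" g] by (simp add: hyp_param_one_third_3)
  also have "(\<integral>\<^sup>+ y. ennreal (simplex3_density g (y 1) (y 2)) * F (y 1) (y 2) \<partial>chart_measure)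
      = (\<integral>\<^sup>+ z. ennreal (simplex3_density g (fst z) (snd z)) * F (fst z) (snd z) \<partial>lborel2)"
    by (rule nn_integral_chart_measure[where F="\<lambda>a b. ennreal (simplex3_density g a b) * F a b"])
       (simp add: case_prod_unfold)
  finally show ?thesis .
qed

lemma nn_integral_nu_cond_swap:
  fixes F :: "real \<Rightarrow> real \<Rightarrow> ennreal"
  assumes [measurable]: "case_prod F \<in> borel_measurable lborel2"
  shows "(\<integral>\<^sup>+ x. F (x 2) (x 1) \<partial>nu_cond g (1/3) 3) = (\<integral>\<^sup>+ x. F (x 1) (x 2) \<partial>nu_cond g (1/3) 3)"
proof -
  have "(\<integral>\<^sup>+ z. ennreal (simplex3_density g (fst z) (snd z)) * F (snd z) (fst z) \<partial>lborel2)
      = (\<integral>\<^sup>+ z. ennreal (simplex3_density g (fst z) (snd z)) * F (fst z) (snd z) \<partial>lborel2)"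
    using nn_integral_lborel2_swap[of "\<lambda>a b. ennreal (simplex3_density g b a) * F b a"]
    by (simp add: simplex3_density_commute[of g "snd _"] case_prod_unfold)
  then show ?thesis
    using nn_integral_nu_cond_pair[of "\<lambda>a b. F b a"] nn_integral_nu_cond_pair[of F]
    by (simp add: case_prod_unfold)
qed

lemma AE_nu_cond_simplex:
  "AE x in nu_cond g (1/3) 3. 0 < x 1 \<and> 0 < x 2 \<and> x 1 + x 2 < 1"
proof -
  define F :: "real \<Rightarrow> real \<Rightarrow> ennreal"
    where "F a b = (if 0 < a \<and> 0 < b \<and> a + b < 1 then 0 else 1)" for a b
  have F_measurable [measurable]: "case_prod F \<in> borel_measurable lborel2"
    unfolding F_def case_prod_unfold by measurable
  have vanishing: "ennreal (simplex3_density g a b) * F a b = 0" for a b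
    by (simp add: F_def simplex3_density_eq_0)
  have "(\<integral>\<^sup>+ x. F (x 1) (x 2) \<partial>nu_cond g (1/3) 3) = 0"
    unfolding nn_integral_nu_cond_pair[OF F_measurable] by (simp add: vanishing)
  moreover have "(\<lambda>x. F (x 1) (x 2)) \<in> borel_measurable (nu_cond g (1/3) 3)"
    by (rule measurable_nu_cond) measurable
  ultimately have "AE x in nu_cond g (1/3) 3. F (x 1) (x 2) = 0"
    by (simp add: nn_integral_0_iff_AE)
  then show ?thesis
    by eventually_elim (simp add: F_def split: if_splits)
qed

subsection \<open>The test function \<open>x\<^sub>1 - c\<close>\<close>

lemma dirichlet_one_third_3:
  "dirichlet g m (1/3) 3 f
     = (\<integral>\<^sup>+ x. ennreal ((x 1 + x 2) powr m * (D_op g 1 2 f x)\<^sup>2) \<partial>nu_cond g (1/3) 3)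
     + (\<integral>\<^sup>+ x. ennreal ((x 2 + x 3) powr m * (D_op g 2 3 f x)\<^sup>2) \<partial>nu_cond g (1/3) 3)"
  unfolding dirichlet_def atLeastLessThan_1_3 by (simp add: numeral_2_eq_2 numeral_3_eq_3)

lemma power2_half_diff_le: "((b - a) / 2)\<^sup>2 \<le> ((a - c)\<^sup>2 + (b - c)\<^sup>2) / (2::real)"
proof -
  have "((a - c)\<^sup>2 + (b - c)\<^sup>2) / 2 - ((b - a) / 2)\<^sup>2 = ((a + b - 2 * c) / 2)\<^sup>2"
    by (simp add: power2_eq_square field_simps)
  then show ?thesis
    by (metis diff_ge_0_iff_ge zero_le_power2)
qed

lemma dirichlet_coordinate_le:
  assumes "0 < g" "0 \<le> m"
  shows "dirichlet g m (1/3) 3 (\<lambda>x. x 1 - c)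
       \<le> (\<integral>\<^sup>+ x. ennreal ((x 1 - c)\<^sup>2) \<partial>nu_cond g (1/3) 3)"
    (is "_ \<le> ?A")
proof -
  let ?\<nu> = "nu_cond g (1/3) 3"
  have D23: "D_op g 2 3 (\<lambda>x. x 1 - c) x = 0" for x
    using E_op_untouched_coordinate[OF assms(1), of 1 2 3 "\<lambda>t. t - c"] by (simp add: D_op_def)
  have D12: "D_op g 1 2 (\<lambda>x. x 1 - c) x = (x 2 - x 1) / 2" for x
    using E_op_moved_coordinate[OF assms(1)] by (simp add: D_op_def)
  have "dirichlet g m (1/3) 3 (\<lambda>x. x 1 - c)
      = (\<integral>\<^sup>+ x. ennreal ((x 1 + x 2) powr m * ((x 2 - x 1) / 2)\<^sup>2) \<partial>?\<nu>)"
    unfolding dirichlet_one_third_3 D23 D12 by simp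
  also have "\<dots> \<le> (\<integral>\<^sup>+ x. ennreal ((x 1 - c)\<^sup>2) / 2 + ennreal ((x 2 - c)\<^sup>2) / 2 \<partial>?\<nu>)"
  proof (rule nn_integral_mono_AE)
    show "AE x in ?\<nu>. ennreal ((x 1 + x 2) powr m * ((x 2 - x 1) / 2)\<^sup>2)
        \<le> ennreal ((x 1 - c)\<^sup>2) / 2 + ennreal ((x 2 - c)\<^sup>2) / 2"
      using AE_nu_cond_simplex
    proof eventually_elim
      case (elim x)
      have "(x 1 + x 2) powr m * ((x 2 - x 1) / 2)\<^sup>2 \<le> 1 * ((x 2 - x 1) / 2)\<^sup>2"
        using elim assms(2) by (intro mult_right_mono powr_le1) auto
      also have "\<dots> \<le> (x 1 - c)\<^sup>2 / 2 + (x 2 - c)\<^sup>2 / 2"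
        using power2_half_diff_le by (simp add: add_divide_distrib)
      finally have "ennreal ((x 1 + x 2) powr m * ((x 2 - x 1) / 2)\<^sup>2)
          \<le> ennreal ((x 1 - c)\<^sup>2 / 2 + (x 2 - c)\<^sup>2 / 2)"
        by (rule ennreal_leI)
      also have "\<dots> = ennreal ((x 1 - c)\<^sup>2) / 2 + ennreal ((x 2 - c)\<^sup>2) / 2"
        by (simp add: ennreal_plus divide_ennreal[symmetric])
      finally show ?case .
    qed
  qed
  also have "\<dots> = ?A / 2 + (\<integral>\<^sup>+ x. ennreal ((x 2 - c)\<^sup>2) \<partial>?\<nu>) / 2"
    by (simp add: nn_integral_add nn_integral_divide measurable_nu_cond)
  also have "(\<integral>\<^sup>+ x. ennreal ((x 2 - c)\<^sup>2) \<partial>?\<nu>) = ?A"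
    using nn_integral_nu_cond_swap[of "\<lambda>a b. ennreal ((a - c)\<^sup>2)" g] by (simp add: case_prod_unfold)
  also have "?A / 2 + ?A / 2 = ?A"
    by (simp add: mult_2[symmetric] ennreal_times_divide mult.commute[of 2] ennreal_mult_divide_eq)
  finally show ?thesis .
qed

lemma nn_integral_coordinate_variance_pos:
  assumes "0 < g"
  shows "0 < (\<integral>\<^sup>+ x. ennreal ((x 1 - c)\<^sup>2) \<partial>nu_cond g (1/3) 3)"
proof -
  let ?F = "\<lambda>z. simplex3_density g (fst z) (snd z) * (fst z - c)\<^sup>2"
  have box: "0 < (\<integral>\<^sup>+ z. ennreal (?F z) \<partial>lborel2)"
    if "c \<notin> {a..a + 1/10}" "0 < a" "a < 1/2" for a
    by (rule nn_integral_lborel2_pos[of _ a "a + 1/10" "1/10" "2/10"])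
       (use that assms in \<open>auto intro!: mult_pos_pos simplex3_density_pos\<close>)
  have "0 < (\<integral>\<^sup>+ z. ennreal (?F z) \<partial>lborel2)"
    by (cases "c \<le> 1/4") (auto intro: box[of "3/10"] box[of "1/10"])
  then show ?thesis
    using nn_integral_nu_cond_pair[of "\<lambda>a b. ennreal ((a - c)\<^sup>2)" g]
      simplex3_mass_finite[OF assms]
    by (simp add: ennreal_zero_less_divide ennreal_mult simplex3_density_nonneg[OF assms])
qed

lemma lambda_star_one_third_3_le_1:
  assumes "0 < g" "0 \<le> m"
  shows "lambda_star g m (1/3) 3 \<le> 1"
proof -
  let ?\<nu> = "nu_cond g (1/3) 3"
  interpret prob_space ?\<nu>
    by (rule prob_space_nu_cond[OF assms(1)])
  define c where "c = (\<integral>x. x 1 \<partial>?\<nu>)"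
  define f :: "(nat \<Rightarrow> real) \<Rightarrow> real" where "f = (\<lambda>x. x 1 - c)"
  have f_measurable: "f \<in> borel_measurable ?\<nu>"
    unfolding f_def by (rule measurable_nu_cond) measurable
  have bounded: "AE x in ?\<nu>. \<bar>x 1\<bar> \<le> 1"
    using AE_nu_cond_simplex by eventually_elim auto
  have "integrable ?\<nu> (\<lambda>x. x 1)"
  proof (rule integrable_const_bound[where B=1])
    show "AE x in ?\<nu>. norm (x 1) \<le> 1"
      using bounded by simp
  qed (rule measurable_nu_cond, measurable)
  then have f_mean: "(\<integral>x. f x \<partial>?\<nu>) = 0"
    by (simp add: f_def c_def prob_space)
  have "integrable ?\<nu> (\<lambda>x. (f x)\<^sup>2)"
  proof (rule integrable_const_bound[where B="(1 + \<bar>c\<bar>)\<^sup>2"])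
    show "AE x in ?\<nu>. norm ((f x)\<^sup>2) \<le> (1 + \<bar>c\<bar>)\<^sup>2"
      using bounded by eventually_elim (auto simp: f_def abs_le_square_iff[symmetric])
  qed (use f_measurable in measurable)
  then have f_norm: "ennreal (\<integral>x. (f x)\<^sup>2 \<partial>?\<nu>) = (\<integral>\<^sup>+ x. ennreal ((f x)\<^sup>2) \<partial>?\<nu>)"
    by (simp add: nn_integral_eq_integral)
  have f_norm_pos: "0 < (\<integral>\<^sup>+ x. ennreal ((f x)\<^sup>2) \<partial>?\<nu>)"
    unfolding f_def by (rule nn_integral_coordinate_variance_pos[OF assms(1)])
  have "lambda_star g m (1/3) 3 \<le> dirichlet g m (1/3) 3 f / ennreal (\<integral>x. (f x)\<^sup>2 \<partial>?\<nu>)"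
    unfolding lambda_star_def
    by (rule INF_lower) (use f_measurable \<open>integrable ?\<nu> (\<lambda>x. (f x)\<^sup>2)\<close> f_mean f_norm f_norm_pos in auto)
  also have "\<dots> \<le> (\<integral>\<^sup>+ x. ennreal ((f x)\<^sup>2) \<partial>?\<nu>) / (\<integral>\<^sup>+ x. ennreal ((f x)\<^sup>2) \<partial>?\<nu>)"
    unfolding f_norm by (unfold f_def) (intro divide_right_mono_ennreal dirichlet_coordinate_le[OF assms])
  also have "\<dots> = 1"
    using f_norm_pos f_norm[symmetric] by (simp add: ennreal_divide_self)
  finally show ?thesis .
qed

theorem mainTheorem10:
  fixes \<gamma> m :: real
  assumes "0 < \<gamma>" and "0 \<le> m"
  shows "kappa \<gamma> m \<le> 3 / 2"
proof -
  have "kappa \<gamma> m \<le> 1"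
    unfolding kappa_def using assms by (rule lambda_star_one_third_3_le_1)
  also have "(1 :: ennreal) \<le> 3 / 2"
    by (simp add: ennreal_numeral[symmetric] divide_ennreal del: ennreal_numeral)
  finally show ?thesis .
qed

end
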